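(* Let $k$ be a symmetric positive semidefinite kernel on $\mathbb{R}^d$ which is Lipschitz continuous in each argument with constant $L_k>0$, let $\sigma_n^2>0$, and let $(\bm{x}^{(i)})_{i=1}^\infty$ be an infinite sequence of training inputs in $\mathbb{X}\subseteq\mathbb{R}^d$. Let $\mathbb{D}_N^x=\{\bm{x}^{(i)}\}_{i=1}^N$, let $\sigma_N^2(\cdot)$ be the GP posterior variance based on $\mathbb{D}_N^x$, and let $\mathbb{B}_\rho^N(\bm{x})=\{\bm{x}'\in\mathbb{D}_N^x:\|\bm{x}'-\bm{x}\|\le\rho\}$. Fix $\bm{x}\in\mathbb{X}$. If there is a function $\rho:\mathbb{N}\to\mathbb{R}_+$ with $\rho(N)\le k(\bm{x},\bm{x})/L_k$ for all $N$, $\lim_{N\to\infty}\rho(N)=0$ and $\lim_{N\to\infty}|\mathbb{B}_{\rho(N)}^N(\bm{x})|=\infty$, then $\lim_{N\to\infty}\sigma_N^2(\bm{x})=0$.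
   Context: Lipschitz in each argument with constant $L_k$ means $|k(\bm{x},\bm{z})-k(\bm{y},\bm{z})|\le L_k\|\bm{x}-\bm{y}\|$ and $|k(\bm{z},\bm{x})-k(\bm{z},\bm{y})|\le L_k\|\bm{x}-\bm{y}\|$ for all $\bm{x},\bm{y},\bm{z}$. Gaussian process posterior variance: with $K_{N,ij}=k(\bm{x}^{(i)},\bm{x}^{(j)})$, $k_{N,i}(\bm{x})=k(\bm{x},\bm{x}^{(i)})$, $\bm{A}_N=\bm{K}_N+\sigma_n^2\bm{I}_N$, $\sigma_N^2(\bm{x})=k(\bm{x},\bm{x})-\bm{k}_N(\bm{x})^T\bm{A}_N^{-1}\bm{k}_N(\bm{x})$. $|\cdot|$ denotes cardinality (counted with multiplicity). *)

theory Defs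
  imports "HOL-Analysis.Analysis"
begin

definition sym_psd_kernel :: "('a \<Rightarrow> 'a \<Rightarrow> real) \<Rightarrow> bool" where
  "sym_psd_kernel k \<longleftrightarrow> (\<forall>x y. k x y = k y x) \<and>
     (\<forall>(n::nat) (p::nat \<Rightarrow> 'a) (c::nat \<Rightarrow> real).
        (\<Sum>i<n. \<Sum>j<n. c i * c j * k (p i) (p j)) \<ge> 0)"

definition lipschitz_each_arg :: "('a::real_normed_vector \<Rightarrow> 'a \<Rightarrow> real) \<Rightarrow> real \<Rightarrow> bool" where
  "lipschitz_each_arg k L \<longleftrightarrow>
     (\<forall>x y z. \<bar>k x z - k y z\<bar> \<le> L * norm (x - y) \<and> \<bar>k z x - k z y\<bar> \<le> L * norm (x - y))"

text \<open>Matrix A_N = K_N + sn2 I_N, indexed by {1..N} (training inputs x 1, ..., x N).\<close>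
definition gp_A :: "('a \<Rightarrow> 'a \<Rightarrow> real) \<Rightarrow> real \<Rightarrow> (nat \<Rightarrow> 'a) \<Rightarrow> nat \<Rightarrow> nat \<Rightarrow> real" where
  "gp_A k sn2 x i j = k (x i) (x j) + (if i = j then sn2 else 0)"

definition gp_A_inv :: "('a \<Rightarrow> 'a \<Rightarrow> real) \<Rightarrow> real \<Rightarrow> (nat \<Rightarrow> 'a) \<Rightarrow> nat \<Rightarrow> nat \<Rightarrow> nat \<Rightarrow> real" where
  "gp_A_inv k sn2 x N = (SOME B. \<forall>i\<in>{1..N}. \<forall>j\<in>{1..N}.
      (\<Sum>l\<in>{1..N}. gp_A k sn2 x i l * B l j) = (if i = j then 1 else 0))"

definition gp_post_var :: "('a \<Rightarrow> 'a \<Rightarrow> real) \<Rightarrow> real \<Rightarrow> (nat \<Rightarrow> 'a) \<Rightarrow> nat \<Rightarrow> 'a \<Rightarrow> real" where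
  "gp_post_var k sn2 x N z = k z z -
     (\<Sum>i\<in>{1..N}. \<Sum>j\<in>{1..N}. k z (x i) * gp_A_inv k sn2 x N i j * k z (x j))"

text \<open>|B_rho^N(z)|: number of training inputs among x 1..x N within distance rho of z,
counted with multiplicity.\<close>
definition ball_count :: "(nat \<Rightarrow> 'a::real_normed_vector) \<Rightarrow> nat \<Rightarrow> real \<Rightarrow> 'a \<Rightarrow> nat" where
  "ball_count x N r z = card {i\<in>{1..N}. norm (x i - z) \<le> r}"

end

theory Submission
  imports Defs "Jordan_Normal_Form.Determinant"
begin

text \<open>Write \<open>c = A\<^sub>N\<^sup>-\<^sup>1 k\<^sub>N(z)\<close>. Since \<open>A\<^sub>N\<close> is symmetric positive definite,
\<open>\<sigma>\<^sub>N\<^sup>2(z) = k(z,z) - k\<^sub>N(z)\<^sup>T c\<close> is the minimum over all weight vectors \<open>d\<close> of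
\<open>k(z,z) - 2 d\<^sup>T k\<^sub>N(z) + d\<^sup>T K\<^sub>N d + \<sigma>\<^sub>n\<^sup>2 |d|\<^sup>2\<close>, and it is nonnegative because
\<open>k(z,z) - 2 c\<^sup>T k\<^sub>N(z) + c\<^sup>T K\<^sub>N c\<close>, the Gram form of \<open>z, x\<^sub>1, \<dots>, x\<^sub>N\<close> with
coefficients \<open>1, -c\<close>, is. Taking for \<open>d\<close> the uniform average over the \<open>m\<close> inputs in the
ball of radius \<open>\<rho>\<close> around \<open>z\<close>, the Lipschitz bounds
\<open>k(z, x\<^sub>i) \<ge> k(z,z) - L\<rho>\<close> and \<open>k(x\<^sub>i, x\<^sub>j) \<le> k(z,z) + 2L\<rho>\<close> give
\<open>\<sigma>\<^sub>N\<^sup>2(z) \<le> 4L\<rho> + \<sigma>\<^sub>n\<^sup>2 / m\<close>, which tends to \<open>0\<close> when \<open>\<rho> \<rightarrow> 0\<close> and \<open>m \<rightarrow> \<infinity>\<close>.\<close>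

lemma psd_form_dual_bound:
  fixes a :: "'b \<Rightarrow> 'b \<Rightarrow> real" and b c d :: "'b \<Rightarrow> real"
  assumes sym: "\<And>i j. i \<in> S \<Longrightarrow> j \<in> S \<Longrightarrow> a i j = a j i"
    and psd: "\<And>v. 0 \<le> (\<Sum>i\<in>S. \<Sum>j\<in>S. v i * v j * a i j)"
    and solves: "\<And>i. i \<in> S \<Longrightarrow> (\<Sum>j\<in>S. a i j * c j) = b i"
  shows "2 * (\<Sum>i\<in>S. d i * b i) - (\<Sum>i\<in>S. \<Sum>j\<in>S. d i * d j * a i j) \<le> (\<Sum>i\<in>S. b i * c i)"
proof -
  define Q where "Q v w = (\<Sum>i\<in>S. \<Sum>j\<in>S. v i * w j * a i j)" for v w :: "'b \<Rightarrow> real"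
  have Q_right: "Q v c = (\<Sum>i\<in>S. v i * b i)" for v
  proof -
    have "Q v c = (\<Sum>i\<in>S. v i * (\<Sum>j\<in>S. a i j * c j))"
      unfolding Q_def by (simp add: sum_distrib_left mult_ac)
    then show ?thesis using solves by simp
  qed
  have Q_left: "Q c v = (\<Sum>i\<in>S. v i * b i)" for v
  proof -
    have "Q c v = (\<Sum>j\<in>S. \<Sum>i\<in>S. c i * v j * a i j)"
      unfolding Q_def by (rule sum.swap)
    also have "\<dots> = (\<Sum>j\<in>S. v j * (\<Sum>i\<in>S. a j i * c i))"
      by (intro sum.cong refl) (simp add: sum_distrib_left mult_ac sym)
    finally show ?thesis using solves by simp
  qed
  have "Q (\<lambda>i. d i - c i) (\<lambda>i. d i - c i) = Q d d - Q d c - Q c d + Q c c"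
    unfolding Q_def by (simp add: algebra_simps sum.distrib sum_subtractf)
  moreover have "0 \<le> Q (\<lambda>i. d i - c i) (\<lambda>i. d i - c i)"
    unfolding Q_def by (rule psd)
  ultimately have "0 \<le> Q d d - 2 * (\<Sum>i\<in>S. d i * b i) + (\<Sum>i\<in>S. c i * b i)"
    using Q_left Q_right by simp
  then show ?thesis
    unfolding Q_def by (simp add: mult.commute)
qed

lemma injective_matrix_right_inverse:
  fixes M :: "nat \<Rightarrow> nat \<Rightarrow> real"
  assumes inj: "\<And>v. \<forall>i\<in>{1..N}. (\<Sum>j\<in>{1..N}. M i j * v j) = 0 \<Longrightarrow> \<forall>j\<in>{1..N}. v j = 0"
  shows "\<exists>B. \<forall>i\<in>{1..N}. \<forall>j\<in>{1..N}. (\<Sum>l\<in>{1..N}. M i l * B l j) = (if i = j then 1 else 0)"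
proof -
  define A where "A = mat N N (\<lambda>(i, j). M (Suc i) (Suc j))"
  have A: "A \<in> carrier_mat N N" by (simp add: A_def)
  have "det A \<noteq> 0"
  proof
    assume "det A = 0"
    then obtain v where v: "v \<in> carrier_vec N" "v \<noteq> 0\<^sub>v N" "A *\<^sub>v v = 0\<^sub>v N"
      using det_0_iff_vec_prod_zero[OF A] by auto
    define w where "w j = v $ (j - 1)" for j
    have "\<forall>i\<in>{1..N}. (\<Sum>j\<in>{1..N}. M i j * w j) = 0"
    proof
      fix i assume i: "i \<in> {1..N}"
      have "(\<Sum>j\<in>{1..N}. M i j * w j) = (A *\<^sub>v v) $ (i - 1)"
        using i v(1) by (auto simp: A_def scalar_prod_def w_def lessThan_atLeast0 sum.atLeast1_atMost_eq)
      then show "(\<Sum>j\<in>{1..N}. M i j * w j) = 0" using v(3) i by auto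
    qed
    then have "\<forall>j\<in>{1..N}. w j = 0" by (rule inj)
    then have "v = 0\<^sub>v N"
      using v(1) by (intro eq_vecI) (auto simp: w_def dest!: bspec[where x="Suc _"])
    with v(2) show False by simp
  qed
  then have "A \<in> Units (ring_mat TYPE(real) N undefined)" by (rule det_non_zero_imp_unit[OF A])
  then obtain B' where B': "B' \<in> carrier_mat N N" "A * B' = 1\<^sub>m N"
    unfolding Units_def ring_mat_def by auto
  show ?thesis
  proof (intro exI ballI)
    fix i j assume i: "i \<in> {1..N}" and j: "j \<in> {1..N}"
    have "(\<Sum>l\<in>{1..N}. M i l * B' $$ (l - 1, j - 1)) = (A * B') $$ (i - 1, j - 1)"
      using i j B'(1) by (auto simp: A_def scalar_prod_def lessThan_atLeast0 sum.atLeast1_atMost_eq)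
    then show "(\<Sum>l\<in>{1..N}. M i l * B' $$ (l - 1, j - 1)) = (if i = j then 1 else 0)"
      using B'(2) i j by auto
  qed
qed

lemma sym_psd_kernel_sym: "sym_psd_kernel k \<Longrightarrow> k u w = k w u"
  unfolding sym_psd_kernel_def by blast

lemma sym_psd_kernel_gram_nonneg:
  fixes x :: "nat \<Rightarrow> 'a"
  assumes "sym_psd_kernel k"
  shows "0 \<le> (\<Sum>i\<in>{1..N}. \<Sum>j\<in>{1..N}. v i * v j * k (x i) (x j))"
  using assms unfolding sym_psd_kernel_def
  by (auto simp: sum.atLeast1_atMost_eq elim!: allE[where x=N] allE[where x="\<lambda>i. x (Suc i)"]
      allE[where x="\<lambda>i. v (Suc i)"])

lemma sym_psd_kernel_residual_nonneg:
  fixes x :: "nat \<Rightarrow> 'a"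
  assumes "sym_psd_kernel k"
  shows "0 \<le> k z z - 2 * (\<Sum>i\<in>{1..N}. c i * k z (x i))
              + (\<Sum>i\<in>{1..N}. \<Sum>j\<in>{1..N}. c i * c j * k (x i) (x j))"
proof -
  define p where "p i = (if i = 0 then z else x i)" for i
  define e where "e i = (if i = 0 then 1 else - c i)" for i
  define g where "g i j = e i * e j * k (p i) (p j)" for i j
  have "0 \<le> (\<Sum>i<Suc N. \<Sum>j<Suc N. g i j)"
    using assms unfolding sym_psd_kernel_def g_def by blast
  also have "\<dots> = g 0 0 + (\<Sum>j<N. g 0 (Suc j)) + (\<Sum>i<N. g (Suc i) 0)
                   + (\<Sum>i<N. \<Sum>j<N. g (Suc i) (Suc j))"
    by (simp only: sum.lessThan_Suc_shift sum.distrib add.assoc)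
  also have "\<dots> = k z z - 2 * (\<Sum>i\<in>{1..N}. c i * k z (x i))
                   + (\<Sum>i\<in>{1..N}. \<Sum>j\<in>{1..N}. c i * c j * k (x i) (x j))"
    using sym_psd_kernel_sym[OF assms]
    by (simp add: g_def e_def p_def sum.atLeast1_atMost_eq sum_negf)
  finally show ?thesis .
qed

lemma gp_A_quadratic_form:
  "(\<Sum>i\<in>{1..N}. \<Sum>j\<in>{1..N}. v i * v j * gp_A k sn2 x i j)
   = (\<Sum>i\<in>{1..N}. \<Sum>j\<in>{1..N}. v i * v j * k (x i) (x j)) + sn2 * (\<Sum>i\<in>{1..N}. (v i)\<^sup>2)"
proof -
  have "(\<Sum>j\<in>{1..N}. v i * v j * gp_A k sn2 x i j)
        = (\<Sum>j\<in>{1..N}. v i * v j * k (x i) (x j)) + sn2 * (v i)\<^sup>2" if "i \<in> {1..N}" for i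
  proof -
    have "(\<Sum>j\<in>{1..N}. v i * v j * gp_A k sn2 x i j)
          = (\<Sum>j\<in>{1..N}. v i * v j * k (x i) (x j) + (if j = i then sn2 * (v i)\<^sup>2 else 0))"
      by (intro sum.cong refl) (auto simp: gp_A_def algebra_simps power2_eq_square)
    then show ?thesis
      using that by (simp add: sum.distrib)
  qed
  then show ?thesis
    by (simp add: sum.distrib sum_distrib_left)
qed

lemma gp_A_quadratic_form_ge:
  assumes "sym_psd_kernel k" and "sn2 > 0"
  shows "sn2 * (\<Sum>i\<in>{1..N}. (v i)\<^sup>2) \<le> (\<Sum>i\<in>{1..N}. \<Sum>j\<in>{1..N}. v i * v j * gp_A k sn2 x i j)"
  unfolding gp_A_quadratic_form using sym_psd_kernel_gram_nonneg[OF assms(1), where v=v and N=N and x=x]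
  by linarith

lemma gp_A_right_inverse:
  assumes "sym_psd_kernel k" and "sn2 > 0" and "i \<in> {1..N}" and "j \<in> {1..N}"
  shows "(\<Sum>l\<in>{1..N}. gp_A k sn2 x i l * gp_A_inv k sn2 x N l j) = (if i = j then 1 else 0)"
proof -
  have "\<forall>j\<in>{1..N}. v j = 0" if "\<forall>i\<in>{1..N}. (\<Sum>j\<in>{1..N}. gp_A k sn2 x i j * v j) = 0" for v
  proof -
    have "(\<Sum>i\<in>{1..N}. \<Sum>j\<in>{1..N}. v i * v j * gp_A k sn2 x i j)
          = (\<Sum>i\<in>{1..N}. v i * (\<Sum>j\<in>{1..N}. gp_A k sn2 x i j * v j))"
      by (simp add: sum_distrib_left mult_ac)
    then have "sn2 * (\<Sum>i\<in>{1..N}. (v i)\<^sup>2) \<le> 0"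
      using that gp_A_quadratic_form_ge[OF assms(1,2), where v=v and N=N and x=x] by simp
    then have "(\<Sum>i\<in>{1..N}. (v i)\<^sup>2) = 0"
      using assms(2) by (simp add: mult_le_0_iff order.antisym sum_nonneg)
    then show ?thesis by (simp add: sum_nonneg_eq_0_iff)
  qed
  then have "\<exists>B. \<forall>i\<in>{1..N}. \<forall>j\<in>{1..N}.
               (\<Sum>l\<in>{1..N}. gp_A k sn2 x i l * B l j) = (if i = j then 1 else 0)"
    by (rule injective_matrix_right_inverse)
  then have "\<forall>i\<in>{1..N}. \<forall>j\<in>{1..N}.
               (\<Sum>l\<in>{1..N}. gp_A k sn2 x i l * gp_A_inv k sn2 x N l j) = (if i = j then 1 else 0)"
    unfolding gp_A_inv_def by (rule someI_ex)
  then show ?thesis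
    using assms(3,4) by blast
qed

definition gp_weights :: "('a \<Rightarrow> 'a \<Rightarrow> real) \<Rightarrow> real \<Rightarrow> (nat \<Rightarrow> 'a) \<Rightarrow> nat \<Rightarrow> 'a \<Rightarrow> nat \<Rightarrow> real" where
  "gp_weights k sn2 x N z i = (\<Sum>j\<in>{1..N}. gp_A_inv k sn2 x N i j * k z (x j))"

lemma gp_A_gp_weights:
  assumes "sym_psd_kernel k" and "sn2 > 0" and "i \<in> {1..N}"
  shows "(\<Sum>l\<in>{1..N}. gp_A k sn2 x i l * gp_weights k sn2 x N z l) = k z (x i)"
proof -
  have "(\<Sum>l\<in>{1..N}. gp_A k sn2 x i l * gp_weights k sn2 x N z l)
        = (\<Sum>j\<in>{1..N}. (\<Sum>l\<in>{1..N}. gp_A k sn2 x i l * gp_A_inv k sn2 x N l j) * k z (x j))"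
    unfolding gp_weights_def sum_distrib_left sum_distrib_right mult.assoc
    by (rule sum.swap)
  also have "\<dots> = (\<Sum>j\<in>{1..N}. if i = j then k z (x j) else 0)"
  proof (intro sum.cong refl)
    fix j assume "j \<in> {1..N}"
    then show "(\<Sum>l\<in>{1..N}. gp_A k sn2 x i l * gp_A_inv k sn2 x N l j) * k z (x j)
               = (if i = j then k z (x j) else 0)"
      using gp_A_right_inverse[OF assms] by simp
  qed
  also have "\<dots> = k z (x i)"
    using assms(3) by simp
  finally show ?thesis .
qed

lemma gp_post_var_gp_weights:
  "gp_post_var k sn2 x N z = k z z - (\<Sum>i\<in>{1..N}. k z (x i) * gp_weights k sn2 x N z i)"
  unfolding gp_post_var_def gp_weights_def by (simp add: sum_distrib_left mult_ac)

lemma gp_post_var_nonneg: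
  assumes "sym_psd_kernel k" and "sn2 > 0"
  shows "0 \<le> gp_post_var k sn2 x N z"
proof -
  let ?c = "gp_weights k sn2 x N z"
  have "(\<Sum>i\<in>{1..N}. \<Sum>j\<in>{1..N}. ?c i * ?c j * gp_A k sn2 x i j)
        = (\<Sum>i\<in>{1..N}. ?c i * (\<Sum>j\<in>{1..N}. gp_A k sn2 x i j * ?c j))"
    by (simp add: sum_distrib_left mult_ac)
  also have "\<dots> = (\<Sum>i\<in>{1..N}. ?c i * k z (x i))"
    using gp_A_gp_weights[OF assms] by simp
  finally have "(\<Sum>i\<in>{1..N}. \<Sum>j\<in>{1..N}. ?c i * ?c j * k (x i) (x j)) + sn2 * (\<Sum>i\<in>{1..N}. (?c i)\<^sup>2)
                = (\<Sum>i\<in>{1..N}. ?c i * k z (x i))"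
    by (simp only: gp_A_quadratic_form)
  moreover have "0 \<le> sn2 * (\<Sum>i\<in>{1..N}. (?c i)\<^sup>2)"
    using assms(2) by (simp add: sum_nonneg)
  ultimately have "(\<Sum>i\<in>{1..N}. \<Sum>j\<in>{1..N}. ?c i * ?c j * k (x i) (x j)) \<le> (\<Sum>i\<in>{1..N}. ?c i * k z (x i))"
    by linarith
  then show ?thesis
    using sym_psd_kernel_residual_nonneg[OF assms(1), where z=z and N=N and c="?c" and x=x]
    by (simp add: gp_post_var_gp_weights mult.commute)
qed

lemma gp_post_var_le:
  assumes "sym_psd_kernel k" and "sn2 > 0"
  shows "gp_post_var k sn2 x N z \<le> k z z - 2 * (\<Sum>i\<in>{1..N}. d i * k z (x i))
           + (\<Sum>i\<in>{1..N}. \<Sum>j\<in>{1..N}. d i * d j * k (x i) (x j)) + sn2 * (\<Sum>i\<in>{1..N}. (d i)\<^sup>2)"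
proof -
  have "2 * (\<Sum>i\<in>{1..N}. d i * k z (x i)) - (\<Sum>i\<in>{1..N}. \<Sum>j\<in>{1..N}. d i * d j * gp_A k sn2 x i j)
        \<le> (\<Sum>i\<in>{1..N}. k z (x i) * gp_weights k sn2 x N z i)"
  proof (rule psd_form_dual_bound)
    show "gp_A k sn2 x i j = gp_A k sn2 x j i" for i j
      using sym_psd_kernel_sym[OF assms(1)] by (simp add: gp_A_def)
    show "0 \<le> (\<Sum>i\<in>{1..N}. \<Sum>j\<in>{1..N}. v i * v j * gp_A k sn2 x i j)" for v
      unfolding gp_A_quadratic_form
      using sym_psd_kernel_gram_nonneg[OF assms(1), where v=v and N=N and x=x] assms(2)
      by (simp add: sum_nonneg)
  qed (rule gp_A_gp_weights[OF assms])
  then show ?thesis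
    unfolding gp_post_var_gp_weights gp_A_quadratic_form by linarith
qed

lemma gp_post_var_le_average:
  assumes "sym_psd_kernel k" and "sn2 > 0" and "T \<subseteq> {1..N}"
  shows "gp_post_var k sn2 x N z \<le> k z z - 2 * (\<Sum>i\<in>T. k z (x i)) / card T
           + (\<Sum>i\<in>T. \<Sum>j\<in>T. k (x i) (x j)) / (card T)\<^sup>2 + sn2 / card T"
proof -
  define d where "d i = of_bool (i \<in> T) / card T" for i
  have restrict: "(\<Sum>i\<in>{1..N}. of_bool (i \<in> T) * f i) = (\<Sum>i\<in>T. f i)" for f :: "nat \<Rightarrow> real"
    using assms(3) by (simp add: Int_absorb1 Collect_mem_eq)
  have linear: "(\<Sum>i\<in>{1..N}. d i * k z (x i)) = (\<Sum>i\<in>T. k z (x i)) / card T"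
    using restrict[of "\<lambda>i. k z (x i) / card T"] by (simp add: d_def sum_divide_distrib)
  have "(\<Sum>i\<in>{1..N}. \<Sum>j\<in>{1..N}. d i * d j * k (x i) (x j))
                 = (\<Sum>i\<in>{1..N}. of_bool (i \<in> T) *
                      (\<Sum>j\<in>{1..N}. of_bool (j \<in> T) * (k (x i) (x j) / (card T)\<^sup>2)))"
    by (simp add: d_def sum_distrib_left power2_eq_square mult_ac)
  also have "\<dots> = (\<Sum>i\<in>T. \<Sum>j\<in>T. k (x i) (x j)) / (card T)\<^sup>2"
    by (simp only: restrict) (simp add: sum_divide_distrib)
  finally have quadratic: "(\<Sum>i\<in>{1..N}. \<Sum>j\<in>{1..N}. d i * d j * k (x i) (x j))
                 = (\<Sum>i\<in>T. \<Sum>j\<in>T. k (x i) (x j)) / (card T)\<^sup>2" .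
  have "(\<Sum>i\<in>{1..N}. (d i)\<^sup>2) = (\<Sum>i\<in>{1..N}. of_bool (i \<in> T) * (1 / (card T)\<^sup>2))"
    by (intro sum.cong refl) (simp add: d_def power_divide)
  also have "\<dots> = card T / (card T)\<^sup>2"
    by (simp only: restrict) simp
  also have "\<dots> = 1 / card T"
    by (cases "card T = 0") (simp_all add: power2_eq_square)
  finally have squares: "(\<Sum>i\<in>{1..N}. (d i)\<^sup>2) = 1 / card T" .
  show ?thesis
    using gp_post_var_le[OF assms(1,2), where d=d and x=x and N=N and z=z]
    unfolding linear quadratic squares by simp
qed

lemma lipschitz_each_arg_ge_diagonal:
  assumes "lipschitz_each_arg k L" and "0 \<le> L" and "norm (w - z) \<le> r"
  shows "k z z - L * r \<le> k z w"
proof -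
  have "\<bar>k z w - k z z\<bar> \<le> L * r"
    using assms unfolding lipschitz_each_arg_def by (meson mult_left_mono order.trans)
  then show ?thesis by linarith
qed

lemma lipschitz_each_arg_le_diagonal:
  assumes "lipschitz_each_arg k L" and "0 \<le> L" and "norm (u - z) \<le> r" and "norm (w - z) \<le> r"
  shows "k u w \<le> k z z + 2 * L * r"
proof -
  have "\<bar>k u w - k z w\<bar> \<le> L * r" and "\<bar>k z w - k z z\<bar> \<le> L * r"
    using assms unfolding lipschitz_each_arg_def by (meson mult_left_mono order.trans)+
  then show ?thesis by linarith
qed

lemma gp_post_var_le_ball_count:
  assumes "sym_psd_kernel k" and "sn2 > 0" and "lipschitz_each_arg k L" and "0 \<le> L"
    and "ball_count x N r z > 0"
  shows "gp_post_var k sn2 x N z \<le> 4 * L * r + sn2 / ball_count x N r z"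
proof -
  define T where "T = {i\<in>{1..N}. norm (x i - z) \<le> r}"
  define m where "m = real (card T)"
  have m_pos: "m > 0"
    using assms(5) by (simp add: m_def T_def ball_count_def)
  have near: "norm (x i - z) \<le> r" if "i \<in> T" for i
    using that by (simp add: T_def)
  have "m * (k z z - L * r) \<le> (\<Sum>i\<in>T. k z (x i))"
    unfolding m_def
    by (rule sum_bounded_below) (intro lipschitz_each_arg_ge_diagonal[OF assms(3,4)] near)
  then have linear: "k z z - L * r \<le> (\<Sum>i\<in>T. k z (x i)) / m"
    using m_pos by (simp add: field_simps)
  have "(\<Sum>i\<in>T. \<Sum>j\<in>T. k (x i) (x j)) \<le> m * (m * (k z z + 2 * L * r))"
    unfolding m_def
    by (intro sum_bounded_above) (simp add: sum_bounded_above lipschitz_each_arg_le_diagonal[OF assms(3,4)] near)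
  then have quadratic: "(\<Sum>i\<in>T. \<Sum>j\<in>T. k (x i) (x j)) / m\<^sup>2 \<le> k z z + 2 * L * r"
    using m_pos by (simp add: field_simps power2_eq_square)
  have "gp_post_var k sn2 x N z \<le> k z z - 2 * ((\<Sum>i\<in>T. k z (x i)) / m)
          + (\<Sum>i\<in>T. \<Sum>j\<in>T. k (x i) (x j)) / m\<^sup>2 + sn2 / m"
    using gp_post_var_le_average[OF assms(1,2), of T N x z] unfolding m_def T_def by fastforce
  then show ?thesis
    using linear quadratic by (simp add: m_def T_def ball_count_def)
qed

theorem corollary3p2:
  fixes k :: "'a::euclidean_space \<Rightarrow> 'a \<Rightarrow> real"
    and Lk sn2 :: real and X :: "'a set" and x :: "nat \<Rightarrow> 'a" and z :: 'a
    and \<rho> :: "nat \<Rightarrow> real"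
  assumes "sym_psd_kernel k"
    and "Lk > 0" and "lipschitz_each_arg k Lk"
    and "sn2 > 0"
    and "\<And>i. i \<ge> 1 \<Longrightarrow> x i \<in> X"
    and "z \<in> X"
    and "\<And>N. \<rho> N > 0"
    and "\<And>N. \<rho> N \<le> k z z / Lk"
    and "\<rho> \<longlonglongrightarrow> 0"
    and "filterlim (\<lambda>N. real (ball_count x N (\<rho> N) z)) at_top sequentially"
  shows "(\<lambda>N. gp_post_var k sn2 x N z) \<longlonglongrightarrow> 0"
proof -
  define m where "m N = real (ball_count x N (\<rho> N) z)" for N
  have "\<forall>\<^sub>F N in sequentially. 1 \<le> m N"
    using assms(10) unfolding m_def filterlim_at_top by blast
  then have upper: "\<forall>\<^sub>F N in sequentially. gp_post_var k sn2 x N z \<le> 4 * Lk * \<rho> N + sn2 / m N"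
    by eventually_elim
      (use assms(2) in \<open>auto simp: m_def intro!: gp_post_var_le_ball_count[OF assms(1,4,3)]\<close>)
  have "(\<lambda>N. sn2 / m N) \<longlonglongrightarrow> 0"
    using assms(10) unfolding m_def
    by (intro tendsto_divide_0[OF tendsto_const] filterlim_at_top_imp_at_infinity)
  then have "(\<lambda>N. 4 * Lk * \<rho> N + sn2 / m N) \<longlonglongrightarrow> 0"
    using tendsto_mult_right_zero[OF assms(9), of "4 * Lk"] tendsto_add_zero by blast
  then show ?thesis
    using upper gp_post_var_nonneg[OF assms(1,4)] by (intro tendsto_sandwich[OF _ upper tendsto_const]) auto
qed

end
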